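(* Let $a>0$ be a constant, $\sigma\in\{1,-1\}$, $J=\mathrm{diag}(1,\sigma)$, and let $\rho_n=\rho_n(s)$ (real-valued) and $q_n=q_n(s)$ (complex-valued), $n\in\mathbb{Z}$, be potentials. For a spectral parameter $\lambda$ consider the linear system $$\Psi_{n+1}=U_n(\rho_n,q_n;\lambda)\Psi_n,\qquad \Psi_{n,s}=V_n(q_n;\lambda)\Psi_n,$$ where $$U_n(\rho_n,q_n;\lambda)=\begin{bmatrix}1-\frac{\mathrm{i}a\rho_n}{\lambda} & -\sigma\frac{q_{n+1}^*-q_n^*}{\lambda}\\[4pt] \frac{q_{n+1}-q_n}{\lambda} & 1+\frac{\mathrm{i}a\rho_n}{\lambda}\end{bmatrix},\qquad V_n(q_n;\lambda)=\frac{\mathrm{i}}{4}\lambda\sigma_3+\frac{\mathrm{i}}{2}\begin{bmatrix}0&\sigma q_n^*\\ q_n&0\end{bmatrix},\qquad \sigma_3=\mathrm{diag}(1,-1).$$ Let $\lambda_1\in\mathbb{C}\setminus\mathbb{R}$ and let $|y_{1,n}\rangle=(\psi_{1,n},\phi_{1,n})^T$ be a solution of this system at $\lambda=\lambda_1$, with $\langle y_{1,n}|J|y_{1,n}\rangle\neq 0$, where $\langle y_{1,n}|=|y_{1,n}\rangle^{\dagger}$ (conjugate transpose). Define the Darboux matrix $$T_n=I+\frac{\lambda_1^*-\lambda_1}{\lambda-\lambda_1^*}P_n,\qquad P_n=\frac{|y_{1,n}\rangle\langle y_{1,n}|J}{\langle y_{1,n}|J|y_{1,n}\rangle}.$$ Then,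 for any solution $\Psi_n$ of the system above, $\Psi_n^{[1]}=T_n\Psi_n$ satisfies $$\Psi_{n+1}^{[1]}=U_n(\rho_n^{[1]},q_n^{[1]};\lambda)\Psi_n^{[1]},\qquad \Psi_{n,s}^{[1]}=V_n(q_n^{[1]};\lambda)\Psi_n^{[1]},$$ where the new potentials are given by the Bäcklund transformation $$\rho_n^{[1]}=\rho_n-\frac{2}{a}\,\partial_s\ln\!\left(\frac{E\big(\langle y_{1,n}|J|y_{1,n}\rangle\big)}{\langle y_{1,n}|J|y_{1,n}\rangle}\right),\qquad q_n^{[1]}=q_n+\frac{(\lambda_1^*-\lambda_1)\psi_{1,n}^*\phi_{1,n}}{\langle y_{1,n}|J|y_{1,n}\rangle},$$ and moreover $$|q_n^{[1]}|^2=|q_n|^2+4\sigma\,\partial_s^2\ln\!\left(\frac{\langle y_{1,n}|J|y_{1,n}\rangle}{\lambda_1^*-\lambda_1}\right).$$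
   Context: $^*$ denotes complex conjugation and $\dagger$ the conjugate transpose. $E$ denotes the shift operator $n\mapsto n+1$, i.e. $E(f_n)=f_{n+1}$. The notation $U_n(\rho_n^{[1]},q_n^{[1]};\lambda)$ means the matrix $U_n$ with $\rho_n,q_n,q_{n+1}$ replaced by $\rho_n^{[1]},q_n^{[1]},q_{n+1}^{[1]}$. This linear system is the Lax pair of the semi-discrete complex coupled dispersionless system (related to the semi-discrete complex short pulse equation via $a\rho_n=x_{n+1}-x_n$). *)

theory Defs
  imports "HOL-Analysis.Analysis"
begin

text \<open>2-component complex vectors are complex^2 (components 1 and 2),
  2x2 complex matrices are complex^2^2 (row-major: M$i$j).\<close>

definition Umat :: "real \<Rightarrow> real \<Rightarrow> real \<Rightarrow> complex \<Rightarrow> complex \<Rightarrow> complex \<Rightarrow> complex^2^2" where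
  "Umat a \<sigma> \<rho>n qn qn1 lam =
     vector [vector [1 - \<i> * of_real (a * \<rho>n) / lam, - of_real \<sigma> * (cnj qn1 - cnj qn) / lam],
             vector [(qn1 - qn) / lam, 1 + \<i> * of_real (a * \<rho>n) / lam]]"

definition Vmat :: "real \<Rightarrow> complex \<Rightarrow> complex \<Rightarrow> complex^2^2" where
  "Vmat \<sigma> qn lam =
     vector [vector [\<i> / 4 * lam, \<i> / 2 * (of_real \<sigma> * cnj qn)],
             vector [\<i> / 2 * qn, - (\<i> / 4 * lam)]]"

definition Jmat :: "real \<Rightarrow> complex^2^2" where
  "Jmat \<sigma> = vector [vector [1, 0], vector [0, of_real \<sigma>]]"

definition braJket :: "real \<Rightarrow> complex^2 \<Rightarrow> complex" where
  "braJket \<sigma> y = (\<Sum>i\<in>UNIV. cnj (y$i) * (Jmat \<sigma> *v y)$i)"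

definition Pmat :: "real \<Rightarrow> complex^2 \<Rightarrow> complex^2^2" where
  "Pmat \<sigma> y = (\<chi> i j. (((\<chi> k l. y$k * cnj (y$l)) ** Jmat \<sigma>) $ i $ j) / braJket \<sigma> y)"

definition Tmat :: "real \<Rightarrow> complex \<Rightarrow> complex^2 \<Rightarrow> complex \<Rightarrow> complex^2^2" where
  "Tmat \<sigma> lam1 y lam =
     (\<chi> i j. (mat 1 :: complex^2^2) $ i $ j + (cnj lam1 - lam1) / (lam - cnj lam1) * Pmat \<sigma> y $ i $ j)"

end

theory Submission
  imports Defs
begin

(* Write U_n(lambda) = I + A_n / lambda, V(lambda) = V(lambda1^* ) + (i/4) (lambda - lambda1^* ) sigma_3 and
   T_n = I + c(lambda) P_n with c(lambda) = mu / (lambda - lambda1^* ), mu = lambda1^* - lambda1, where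
   P_n = |y_n><y_n| J / <y_n|J|y_n> is a projector.  Once the dressed Lax matrices are taken to be
   U_n^[1] = I + (A_n + mu (P_(n+1) - P_n)) / lambda and V^[1] = V + (i/4) mu [P_n, sigma_3], the relations
   T_(n+1) U_n = U_n^[1] T_n and (T_n)_s + T_n V = V^[1] T_n hold for every lambda as soon as
     P_(n+1) (lambda1^* + A_n - mu P_n) = (lambda1 + A_n) P_n   and
     (P_n)_s = [V(lambda1^* ), P_n] + (i/4) mu [P_n, sigma_3] P_n,
   and these two identities follow from y_(n+1) = U_n(lambda1) y_n and (y_n)_s = V(lambda1) y_n.
   The entries of P_n give the Baecklund transformation of the potentials.  With pi = |psi|^2 / <y|J|y>
   one has (ln <y|J|y>)_s = Im lambda1 (1/2 - pi) and pi_s = - Im lambda1 pi (1 - pi) - sigma Im (q^* P_21),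
   which yields the formula for |q^[1]|^2. *)

section \<open>Derivatives of vector- and matrix-valued functions\<close>

lemma has_vector_derivative_vec:
  fixes f :: "real \<Rightarrow> 'a::real_normed_vector^'n"
  assumes "\<And>i. ((\<lambda>t. f t $ i) has_vector_derivative f' $ i) (at t within S)"
  shows "(f has_vector_derivative f') (at t within S)"
proof -
  have "((\<lambda>u. ((f u $ i - f t $ i) - (u - t) *\<^sub>R f' $ i) /\<^sub>R norm (u - t)) \<longlongrightarrow> 0) (at t within S)" for i
    using assms[of i] unfolding has_vector_derivative_def has_derivative_at_within by simp
  then show ?thesis
    unfolding has_vector_derivative_def has_derivative_at_within
    by (auto intro: bounded_linear_scaleR_left vec_tendstoI)
qed

lemma has_vector_derivative_vec_nth:
  "(f has_vector_derivative f') F \<Longrightarrow> ((\<lambda>t. f t $ i) has_vector_derivative f' $ i) F"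
  by (rule bounded_linear.has_vector_derivative[OF bounded_linear_vec_nth])

lemma has_vector_derivative_matrix_vector_mult:
  fixes M :: "real \<Rightarrow> 'a::real_normed_algebra_1^'n^'m"
  assumes "(M has_vector_derivative M') (at t within S)" and "(x has_vector_derivative x') (at t within S)"
  shows "((\<lambda>t. M t *v x t) has_vector_derivative M t *v x' + M' *v x t) (at t within S)"
proof (rule has_vector_derivative_vec)
  fix i
  have "((\<lambda>t. \<Sum>j\<in>UNIV. M t $ i $ j * x t $ j) has_vector_derivative
          (\<Sum>j\<in>UNIV. M t $ i $ j * x' $ j + M' $ i $ j * x t $ j)) (at t within S)"
    by (intro has_vector_derivative_sum has_vector_derivative_mult has_vector_derivative_vec_nth assms)
  then show "((\<lambda>t. (M t *v x t) $ i) has_vector_derivative (M t *v x' + M' *v x t) $ i) (at t within S)"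
    by (simp add: matrix_vector_mult_def sum.distrib)
qed

lemma mat_matrix_mult_nth: "(mat c ** M) $ i $ j = c * M $ i $ j"
  for M :: "'a::semiring_1^'n^'m"
  by (simp add: matrix_matrix_mult_def mat_def if_distrib[of "\<lambda>x. x * _"] cong: if_cong)

lemma has_vector_derivative_mat_matrix_mult:
  fixes M :: "real \<Rightarrow> 'a::real_normed_algebra_1^'n^'m"
  assumes "(M has_vector_derivative M') (at t within S)"
  shows "((\<lambda>t. mat c ** M t) has_vector_derivative mat c ** M') (at t within S)"
proof (rule has_vector_derivative_vec, rule has_vector_derivative_vec)
  fix i j
  have "((\<lambda>t. M t $ i $ j) has_vector_derivative M' $ i $ j) (at t within S)"
    by (rule has_vector_derivative_vec_nth, rule has_vector_derivative_vec_nth, rule assms)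
  then show "((\<lambda>t. (mat c ** M t) $ i $ j) has_vector_derivative (mat c ** M') $ i $ j) (at t within S)"
    unfolding mat_matrix_mult_nth by (rule has_vector_derivative_mult_right)
qed

lemma has_vector_derivative_quotient:
  fixes f g :: "real \<Rightarrow> 'a::real_normed_field"
  assumes "(f has_vector_derivative f') (at t)" and "(g has_vector_derivative g') (at t)" and "g t \<noteq> 0"
  shows "((\<lambda>t. f t / g t) has_vector_derivative (f' * g t - f t * g') / (g t)\<^sup>2) (at t)"
proof -
  have "((\<lambda>t. inverse (g t)) has_vector_derivative - (inverse (g t) * g' * inverse (g t))) (at t)"
    using Deriv.has_derivative_inverse[OF assms(3) assms(2)[unfolded has_vector_derivative_def]]
    unfolding has_vector_derivative_def by (simp add: algebra_simps scaleR_conv_of_real)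
  from has_vector_derivative_mult[OF assms(1) this]
  have "((\<lambda>t. f t * inverse (g t)) has_vector_derivative
          f t * - (inverse (g t) * g' * inverse (g t)) + f' * inverse (g t)) (at t)" .
  moreover have "f t * - (inverse (g t) * g' * inverse (g t)) + f' * inverse (g t) = (f' * g t - f t * g') / (g t)\<^sup>2"
    using assms(3) by (simp add: field_simps power2_eq_square)
  ultimately show ?thesis by (simp add: divide_inverse)
qed

lemma DERIV_cmod_power2:
  fixes z :: "real \<Rightarrow> complex"
  assumes "(z has_vector_derivative z') (at t)"
  shows "((\<lambda>t. (cmod (z t))\<^sup>2) has_real_derivative 2 * Re (cnj (z t) * z')) (at t)"
proof -
  have "((\<lambda>t. Re (cnj (z t) * z t)) has_vector_derivative Re (cnj (z t) * z' + cnj z' * z t)) (at t)"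
    by (intro bounded_linear.has_vector_derivative[OF bounded_linear_Re] has_vector_derivative_mult
        has_vector_derivative_cnj assms)
  moreover have "(\<lambda>t. Re (cnj (z t) * z t)) = (\<lambda>t. (cmod (z t))\<^sup>2)"
    by (simp add: fun_eq_iff cmod_power2 flip: power2_eq_square)
  moreover have "Re (cnj (z t) * z' + cnj z' * z t) = 2 * Re (cnj (z t) * z')"
    by simp
  ultimately show ?thesis by (simp only: has_real_derivative_iff_has_vector_derivative)
qed

lemma ln_abs_real: "ln \<bar>x\<bar> = ln (x::real)"
  by (simp add: ln_real_def)

lemma DERIV_ln_nonzero:
  fixes x :: real
  assumes "x \<noteq> 0"
  shows "(ln has_real_derivative inverse x) (at x)"
proof (cases "x > 0")
  case True
  then show ?thesis by (rule DERIV_ln)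
next
  case False
  with assms have "(ln \<circ> uminus has_real_derivative inverse (- x) * - 1) (at x)"
    by (intro DERIV_chain DERIV_ln derivative_intros) auto
  moreover have "ln \<circ> uminus = (ln :: real \<Rightarrow> real)" by (auto simp: ln_minus)
  ultimately show ?thesis by simp
qed

section \<open>Two-by-two matrices\<close>

abbreviation mat2 :: "'a::zero \<Rightarrow> 'a \<Rightarrow> 'a \<Rightarrow> 'a \<Rightarrow> 'a^2^2" where
  "mat2 a b c d \<equiv> vector [vector [a, b], vector [c, d]]"

lemma mat2_eta: "M = mat2 (M$1$1) (M$1$2) (M$2$1) (M$2$2)"
  by (simp add: vec_eq_iff forall_2)

lemma mat2_eq_iff: "mat2 a b c d = mat2 a' b' c' d' \<longleftrightarrow> a = a' \<and> b = b' \<and> c = c' \<and> d = d'"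
  by (simp add: vec_eq_iff forall_2)

lemma mat2_mult: "(mat2 a b c d :: 'a::comm_ring_1^2^2) ** mat2 a' b' c' d'
    = mat2 (a * a' + b * c') (a * b' + b * d') (c * a' + d * c') (c * b' + d * d')"
  by (simp add: vec_eq_iff forall_2 matrix_matrix_mult_def sum_2)

lemma mat2_mult_vec: "(mat2 a b c d :: 'a::comm_ring_1^2^2) *v v = vector [a * v$1 + b * v$2, c * v$1 + d * v$2]"
  by (simp add: vec_eq_iff forall_2 matrix_vector_mult_def sum_2)

lemma mat2_add: "mat2 a b c d + mat2 a' b' c' d' = (mat2 (a + a') (b + b') (c + c') (d + d') :: 'a::comm_ring_1^2^2)"
  by (simp add: vec_eq_iff forall_2)

lemma mat2_diff: "mat2 a b c d - mat2 a' b' c' d' = (mat2 (a - a') (b - b') (c - c') (d - d') :: 'a::comm_ring_1^2^2)"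
  by (simp add: vec_eq_iff forall_2)

lemma mat_2: "(mat x :: 'a::zero^2^2) = mat2 x 0 0 x"
  by (simp add: vec_eq_iff forall_2 mat_def)

lemmas mat2_simps = mat2_mult mat2_mult_vec mat2_add mat2_diff mat_2 mat2_eq_iff

lemma has_vector_derivative_mat2:
  assumes "(a has_vector_derivative a') (at t within S)" "(b has_vector_derivative b') (at t within S)"
    "(c has_vector_derivative c') (at t within S)" "(d has_vector_derivative d') (at t within S)"
  shows "((\<lambda>t. mat2 (a t) (b t) (c t) (d t)) has_vector_derivative mat2 a' b' c' d') (at t within S)"
proof (intro has_vector_derivative_vec)
  fix i j :: 2
  show "((\<lambda>t. mat2 (a t) (b t) (c t) (d t) $ i $ j) has_vector_derivative mat2 a' b' c' d' $ i $ j) (at t within S)"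
    using exhaust_2[of i] exhaust_2[of j] assms by auto
qed

lemma dressing_intertwines_shift:
  fixes P P' A :: "'a::field^2^2"
  assumes "l \<noteq> 0" and "c * (l - \<nu>) = \<nu> - L" and "P ** P = P"
    and "P' ** (mat \<nu> + A - mat (\<nu> - L) ** P) = (mat L + A) ** P"
  shows "(mat 1 + mat c ** P') ** (mat 1 + mat (1 / l) ** A)
       = (mat 1 + mat (1 / l) ** (A + mat (\<nu> - L) ** (P' - P))) ** (mat 1 + mat c ** P)"
proof -
  obtain p11 p12 p21 p22 where P: "P = mat2 p11 p12 p21 p22" by (rule that, rule mat2_eta)
  obtain r11 r12 r21 r22 where P': "P' = mat2 r11 r12 r21 r22" by (rule that, rule mat2_eta)
  obtain a11 a12 a21 a22 where A: "A = mat2 a11 a12 a21 a22" by (rule that, rule mat2_eta)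
  have "(mat 1 + mat c ** P') ** (mat 1 + mat (1 / l) ** A)
       - (mat 1 + mat (1 / l) ** (A + mat (\<nu> - L) ** (P' - P))) ** (mat 1 + mat c ** P)
       = mat (c / l) ** (P' ** (mat \<nu> + A - mat (\<nu> - L) ** P) - (mat L + A) ** P
                          + mat (\<nu> - L) ** (P ** P - P))"
  proof -
    have L: "L = \<nu> - c * (l - \<nu>)" using assms(2) by simp
    show ?thesis unfolding P P' A mat2_simps L using assms(1) by (simp add: field_simps)
  qed
  then show ?thesis using assms(3,4) by simp
qed

lemma dressing_intertwines_flow:
  fixes P D V S :: "'a::field^2^2"
  assumes "c * (l - \<nu>) = \<mu>"
    and "D = V ** P - P ** V + mat (\<kappa> * \<mu>) ** (P ** S - S ** P) ** P"
  shows "mat c ** D + (mat 1 + mat c ** P) ** (V + mat (\<kappa> * (l - \<nu>)) ** S)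
       = (V + mat (\<kappa> * \<mu>) ** (P ** S - S ** P) + mat (\<kappa> * (l - \<nu>)) ** S) ** (mat 1 + mat c ** P)"
proof -
  obtain p11 p12 p21 p22 where P: "P = mat2 p11 p12 p21 p22" by (rule that, rule mat2_eta)
  obtain v11 v12 v21 v22 where V: "V = mat2 v11 v12 v21 v22" by (rule that, rule mat2_eta)
  obtain s11 s12 s21 s22 where S: "S = mat2 s11 s12 s21 s22" by (rule that, rule mat2_eta)
  show ?thesis unfolding assms(2) P V S mat2_simps assms(1)[symmetric] by (simp add: field_simps)
qed

section \<open>The projector and the Lax matrices\<close>

definition laxA :: "real \<Rightarrow> complex \<Rightarrow> complex \<Rightarrow> complex^2^2" where
  "laxA \<sigma> k d = mat2 (- k) (- of_real \<sigma> * cnj d) d k"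

definition pauli3 :: "complex^2^2" where
  "pauli3 = mat2 1 0 0 (- 1)"

definition P11 :: "real \<Rightarrow> complex^2 \<Rightarrow> real" where
  "P11 \<sigma> y = (cmod (y$1))\<^sup>2 / Re (braJket \<sigma> y)"

definition P21 :: "real \<Rightarrow> complex^2 \<Rightarrow> complex" where
  "P21 \<sigma> y = cnj (y$1) * y$2 / braJket \<sigma> y"

lemma braJket_eq: "braJket \<sigma> y = y$1 * cnj (y$1) + of_real \<sigma> * (y$2 * cnj (y$2))"
  unfolding braJket_def Jmat_def by (simp add: sum_2 mat2_mult_vec algebra_simps)

lemma braJket_real: "braJket \<sigma> y = of_real ((cmod (y$1))\<^sup>2 + \<sigma> * (cmod (y$2))\<^sup>2)"
  unfolding braJket_eq by (simp only: of_real_add of_real_mult complex_norm_square)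

lemma Re_braJket: "Re (braJket \<sigma> y) = (cmod (y$1))\<^sup>2 + \<sigma> * (cmod (y$2))\<^sup>2"
  by (simp only: braJket_real Re_complex_of_real)

lemma Im_braJket [simp]: "Im (braJket \<sigma> y) = 0"
  by (simp only: braJket_real Im_complex_of_real)

lemma Re_braJket_eq_0_iff: "Re (braJket \<sigma> y) = 0 \<longleftrightarrow> braJket \<sigma> y = 0"
  by (simp add: complex_eq_iff)

lemma of_real_Re_braJket: "of_real (Re (braJket \<sigma> y)) = braJket \<sigma> y"
  by (simp add: complex_eq_iff)

lemma cnj_braJket [simp]: "cnj (braJket \<sigma> y) = braJket \<sigma> y"
  by (simp add: complex_eq_iff)

lemma of_real_P11: "of_real (P11 \<sigma> y) = y$1 * cnj (y$1) / braJket \<sigma> y"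
  by (simp only: P11_def of_real_divide complex_norm_square of_real_Re_braJket)

lemma Pmat_eq:
  "Pmat \<sigma> y = mat2 (y$1 * (cnj (y$1) / braJket \<sigma> y)) (y$1 * (of_real \<sigma> * cnj (y$2) / braJket \<sigma> y))
                      (y$2 * (cnj (y$1) / braJket \<sigma> y)) (y$2 * (of_real \<sigma> * cnj (y$2) / braJket \<sigma> y))"
  unfolding Pmat_def Jmat_def by (simp add: vec_eq_iff forall_2 matrix_matrix_mult_def sum_2)

lemma one_minus_P11:
  assumes "braJket \<sigma> y \<noteq> 0"
  shows "1 - of_real (P11 \<sigma> y) = y$2 * (of_real \<sigma> * cnj (y$2) / braJket \<sigma> y)"
  using assms unfolding of_real_P11 by (simp add: field_simps braJket_eq)

lemma Pmat_entries:
  assumes "braJket \<sigma> y \<noteq> 0"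
  shows "Pmat \<sigma> y = mat2 (of_real (P11 \<sigma> y)) (of_real \<sigma> * cnj (P21 \<sigma> y)) (P21 \<sigma> y) (1 - of_real (P11 \<sigma> y))"
  unfolding Pmat_eq one_minus_P11[OF assms] unfolding of_real_P11 P21_def mat2_eq_iff by simp

lemma P21_cnj_mult:
  assumes "\<sigma> = 1 \<or> \<sigma> = -1" and "braJket \<sigma> y \<noteq> 0"
  shows "of_real \<sigma> * (cnj (P21 \<sigma> y) * P21 \<sigma> y) = of_real (P11 \<sigma> y) * (1 - of_real (P11 \<sigma> y))"
proof -
  have "of_real \<sigma> * of_real \<sigma> = (1 :: complex)" using assms(1) by auto
  with assms(2) show ?thesis unfolding one_minus_P11[OF assms(2)] of_real_P11 P21_def
    by (simp add: field_simps) (simp add: braJket_eq algebra_simps)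
qed

lemma Pmat_idem:
  assumes "\<sigma> = 1 \<or> \<sigma> = -1" and "braJket \<sigma> y \<noteq> 0"
  shows "Pmat \<sigma> y ** Pmat \<sigma> y = Pmat \<sigma> y"
  using P21_cnj_mult[OF assms] unfolding Pmat_entries[OF assms(2)] mat2_simps
  by (simp add: algebra_simps)

lemma Tmat_eq: "Tmat \<sigma> L y l = mat 1 + mat ((cnj L - L) / (l - cnj L)) ** Pmat \<sigma> y"
  unfolding Tmat_def by (simp add: vec_eq_iff forall_2 matrix_matrix_mult_def sum_2 mat_def)

lemma Umat_eq: "Umat a \<sigma> r qn qn1 l = mat 1 + mat (1 / l) ** laxA \<sigma> (\<i> * of_real (a * r)) (qn1 - qn)"
  unfolding Umat_def laxA_def mat2_simps by simp

lemma Vmat_shift: "Vmat \<sigma> q l = Vmat \<sigma> q \<nu> + mat (\<i> / 4 * (l - \<nu>)) ** pauli3"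
  unfolding Vmat_def pauli3_def mat2_simps by (simp add: field_simps)

lemma laxA_apply:
  "(mat 1 + mat (1 / L) ** laxA \<sigma> k d) *v y
     = vector [y$1 + (- k * y$1 - of_real \<sigma> * cnj d * y$2) / L, y$2 + (d * y$1 + k * y$2) / L]"
  unfolding laxA_def mat2_simps by (simp add: vec_eq_iff forall_2 field_split_simps)

lemma laxA_dressed:
  assumes "cnj \<mu> = - \<mu>" and "braJket \<sigma> y \<noteq> 0" and "braJket \<sigma> y' \<noteq> 0"
  shows "laxA \<sigma> k d + mat \<mu> ** (Pmat \<sigma> y' - Pmat \<sigma> y)
       = laxA \<sigma> (k - \<mu> * of_real (P11 \<sigma> y' - P11 \<sigma> y)) (d + \<mu> * (P21 \<sigma> y' - P21 \<sigma> y))"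
  unfolding laxA_def Pmat_entries[OF assms(2)] Pmat_entries[OF assms(3)] mat2_simps
  using assms(1) by (simp add: algebra_simps)

lemma Vmat_dressed:
  assumes "cnj \<mu> = - \<mu>" and "braJket \<sigma> y \<noteq> 0"
  shows "Vmat \<sigma> (q + \<mu> * P21 \<sigma> y) l
       = Vmat \<sigma> q l + mat (\<i> / 4 * \<mu>) ** (Pmat \<sigma> y ** pauli3 - pauli3 ** Pmat \<sigma> y)"
  unfolding Vmat_def pauli3_def Pmat_entries[OF assms(2)] mat2_simps
  using assms(1) by (simp add: algebra_simps)

section \<open>Darboux transformation\<close>

lemma Pmat_intertwine:
  fixes y y' :: "complex^2" and k d L :: complex
  assumes \<sigma>: "\<sigma> = 1 \<or> \<sigma> = -1" and k: "cnj k = - k" and L: "L \<noteq> 0"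
    and y': "y' = (mat 1 + mat (1 / L) ** laxA \<sigma> k d) *v y"
    and N: "braJket \<sigma> y \<noteq> 0" and N': "braJket \<sigma> y' \<noteq> 0"
  shows "Pmat \<sigma> y' ** (mat (cnj L) + laxA \<sigma> k d - mat (cnj L - L) ** Pmat \<sigma> y)
       = (mat L + laxA \<sigma> k d) ** Pmat \<sigma> y"
proof -
  define s where "s = complex_of_real \<sigma>"
  define \<mu> where "\<mu> = cnj L - L"
  define p f p' f' where "p = y$1" and "f = y$2" and "p' = y'$1" and "f' = y'$2"
  define N N' where "N = braJket \<sigma> y" and "N' = braJket \<sigma> y'"
  have s: "s = 1 \<or> s = -1" and cnj_s: "cnj s = s" using \<sigma> unfolding s_def by auto
  have hN: "N = p * cnj p + s * (f * cnj f)" and hN': "N' = p' * cnj p' + s * (f' * cnj f')"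
    unfolding N_def N'_def p_def f_def p'_def f'_def s_def by (simp_all add: braJket_eq)
  have p': "p' = p + (- k * p - s * cnj d * f) / L" and f': "f' = f + (d * p + k * f) / L"
    unfolding p'_def f'_def p_def f_def s_def y' laxA_apply by simp_all
  then have cp': "cnj p' = cnj p + (k * cnj p - s * d * cnj f) / cnj L"
    and cf': "cnj f' = cnj f + (cnj d * cnj p - k * cnj f) / cnj L"
    using k cnj_s by simp_all
  (* the two entries of the row identity  y'^H J (L^* + A - mu P) = (L N' / N) y^H J,
     where A = laxA sigma k d, P = Pmat sigma y and y^H is the conjugate transpose *)
  have row1: "cnj p' * (cnj L - k - \<mu> * (p * (cnj p / N))) + s * cnj f' * (d - \<mu> * (f * (cnj p / N)))
      = N' * L * (cnj p / N)"
    and row2: "cnj p' * (- s * cnj d - \<mu> * (p * (s * cnj f / N))) + s * cnj f' * (cnj L + k - \<mu> * (f * (s * cnj f / N)))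
      = N' * L * (s * cnj f / N)"
    using s L N unfolding N_def[symmetric] hN' cp' cf' unfolding p' f' \<mu>_def
    by (elim disjE; simp add: field_simps; unfold hN; simp add: algebra_simps)+
  have "Pmat \<sigma> y' ** (mat (cnj L) + laxA \<sigma> k d - mat \<mu> ** Pmat \<sigma> y)
      = mat2 (p' * (L * (cnj p / N))) (p' * (L * (s * cnj f / N))) (f' * (L * (cnj p / N))) (f' * (L * (s * cnj f / N)))"
  proof -
    have "Pmat \<sigma> y' ** (mat (cnj L) + laxA \<sigma> k d - mat \<mu> ** Pmat \<sigma> y)
      = mat2 (p' / N' * (N' * L * (cnj p / N))) (p' / N' * (N' * L * (s * cnj f / N)))
             (f' / N' * (N' * L * (cnj p / N))) (f' / N' * (N' * L * (s * cnj f / N)))"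
      unfolding row1[symmetric] row2[symmetric] Pmat_eq laxA_def mat2_simps
      unfolding p_def[symmetric] f_def[symmetric] p'_def[symmetric] f'_def[symmetric]
        N_def[symmetric] N'_def[symmetric] s_def[symmetric]
      by (simp add: algebra_simps add_divide_distrib)
    then show ?thesis using N' unfolding N'_def[symmetric] by simp
  qed
  also have "\<dots> = (mat L + laxA \<sigma> k d) ** Pmat \<sigma> y"
    unfolding Pmat_eq laxA_def mat2_simps
    using L N unfolding p_def[symmetric] f_def[symmetric] N_def[symmetric] s_def[symmetric] p' f'
    by (simp add: field_simps)
  finally show ?thesis unfolding \<mu>_def .
qed

lemma Pmat_has_vector_derivative:
  fixes y :: "real \<Rightarrow> complex^2"
  assumes \<sigma>: "\<sigma> = 1 \<or> \<sigma> = -1"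
    and y: "(y has_vector_derivative Vmat \<sigma> q L *v y t) (at t)"
    and N: "braJket \<sigma> (y t) \<noteq> 0"
  defines "P \<equiv> Pmat \<sigma> (y t)" and "V \<equiv> Vmat \<sigma> q (cnj L)"
  shows "((\<lambda>t. Pmat \<sigma> (y t)) has_vector_derivative
           V ** P - P ** V + mat (\<i> / 4 * (cnj L - L)) ** (P ** pauli3 - pauli3 ** P) ** P) (at t)"
proof -
  define s where "s = complex_of_real \<sigma>"
  define p f N where "p u = y u $ 1" and "f u = y u $ 2" and "N u = braJket \<sigma> (y u)" for u
  define p' f' where "p' = \<i> * (L / 4 * p t + s * cnj q / 2 * f t)" and "f' = \<i> * (q / 2 * p t - L / 4 * f t)"
  have s: "s = 1 \<or> s = -1" and cnj_s: "cnj s = s" using \<sigma> unfolding s_def by auto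
  have hN: "N u = p u * cnj (p u) + s * (f u * cnj (f u))" for u
    unfolding N_def p_def f_def s_def by (rule braJket_eq)
  have dp: "(p has_vector_derivative p') (at t)" and df: "(f has_vector_derivative f') (at t)"
    using has_vector_derivative_vec_nth[OF y, of 1] has_vector_derivative_vec_nth[OF y, of 2]
    unfolding p_def[abs_def] f_def[abs_def] p'_def f'_def s_def Vmat_def mat2_mult_vec
    by (simp_all add: algebra_simps)
  note dpc = has_vector_derivative_cnj[OF dp] and dfc = has_vector_derivative_cnj[OF df]
  define N' where "N' = p t * cnj p' + p' * cnj (p t) + s * (f t * cnj f' + f' * cnj (f t))"
  have "N = (\<lambda>u. p u * cnj (p u) + s * (f u * cnj (f u)))" using hN by (intro ext)
  then have dN: "(N has_vector_derivative N') (at t)"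
    unfolding N'_def by (simp only:) (intro has_vector_derivative_add has_vector_derivative_mult_right
        has_vector_derivative_mult dp df dpc dfc)
  have N0: "N t \<noteq> 0" using N unfolding N_def .
  have entry: "((\<lambda>u. a u * (b u / N u)) has_vector_derivative
                 a t * ((b' * N t - b t * N') / (N t)\<^sup>2) + a' * (b t / N t)) (at t)"
    if "(a has_vector_derivative a') (at t)" "(b has_vector_derivative b') (at t)" for a b a' b'
    by (intro has_vector_derivative_mult has_vector_derivative_quotient that dN N0)
  define DP where "DP = mat2
          (p t * ((cnj p' * N t - cnj (p t) * N') / (N t)\<^sup>2) + p' * (cnj (p t) / N t))
          (p t * ((s * cnj f' * N t - s * cnj (f t) * N') / (N t)\<^sup>2) + p' * (s * cnj (f t) / N t))
          (f t * ((cnj p' * N t - cnj (p t) * N') / (N t)\<^sup>2) + f' * (cnj (p t) / N t))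
          (f t * ((s * cnj f' * N t - s * cnj (f t) * N') / (N t)\<^sup>2) + f' * (s * cnj (f t) / N t))"
  have "((\<lambda>u. Pmat \<sigma> (y u)) has_vector_derivative DP) (at t)"
    unfolding DP_def Pmat_eq p_def[symmetric] f_def[symmetric] N_def[symmetric] s_def[symmetric]
    by (intro has_vector_derivative_mat2 entry dp df dpc dfc has_vector_derivative_mult_right)
  moreover have "DP = V ** P - P ** V + mat (\<i> / 4 * (cnj L - L)) ** (P ** pauli3 - pauli3 ** P) ** P"
    using s N0 unfolding DP_def P_def V_def Pmat_eq Vmat_def pauli3_def mat2_simps
      p_def[symmetric] f_def[symmetric] N_def[symmetric] s_def[symmetric] N'_def p'_def f'_def
    by (elim disjE; simp add: field_simps power2_eq_square cnj_s; unfold hN; simp add: algebra_simps)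
  ultimately show ?thesis by simp
qed

lemma Tmat_shift_intertwine:
  assumes \<sigma>: "\<sigma> = 1 \<or> \<sigma> = -1" and L: "Im L \<noteq> 0" and l: "l \<noteq> 0" "l \<noteq> cnj L"
    and y': "y' = Umat a \<sigma> r qn qn' L *v y"
    and N: "braJket \<sigma> y \<noteq> 0" and N': "braJket \<sigma> y' \<noteq> 0"
    and r1: "a * r1 = a * r + 2 * Im L * (P11 \<sigma> y' - P11 \<sigma> y)"
    and p: "p = qn + (cnj L - L) * P21 \<sigma> y" and p': "p' = qn' + (cnj L - L) * P21 \<sigma> y'"
  shows "Tmat \<sigma> L y' l ** Umat a \<sigma> r qn qn' l = Umat a \<sigma> r1 p p' l ** Tmat \<sigma> L y l"
proof -
  define k where "k = \<i> * of_real (a * r)"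
  have L0: "L \<noteq> 0" and \<mu>: "cnj (cnj L - L) = - (cnj L - L)" and k: "cnj k = - k"
    using L unfolding k_def by auto
  have c: "(cnj L - L) / (l - cnj L) * (l - cnj L) = cnj L - L" using l by simp
  have A: "laxA \<sigma> (\<i> * of_real (a * r1)) (p' - p)
      = laxA \<sigma> k (qn' - qn) + mat (cnj L - L) ** (Pmat \<sigma> y' - Pmat \<sigma> y)"
  proof -
    have \<mu>_Im: "cnj L - L = - 2 * \<i> * of_real (Im L)" by (simp add: complex_eq_iff)
    show ?thesis unfolding laxA_dressed[OF \<mu> N N'] unfolding k_def of_real_mult r1 p p' \<mu>_Im
      by (simp add: algebra_simps)
  qed
  have Y: "y' = (mat 1 + mat (1 / L) ** laxA \<sigma> k (qn' - qn)) *v y"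
    unfolding y' Umat_eq k_def ..
  show ?thesis
    unfolding Umat_eq Tmat_eq k_def[symmetric] A
    by (rule dressing_intertwines_shift[OF l(1) c Pmat_idem[OF \<sigma> N] Pmat_intertwine[OF \<sigma> k L0 Y N N']])
qed

lemma Tmat_flow_intertwine:
  fixes y \<Psi> :: "real \<Rightarrow> complex^2"
  assumes \<sigma>: "\<sigma> = 1 \<or> \<sigma> = -1" and l: "l \<noteq> cnj L"
    and y: "(y has_vector_derivative Vmat \<sigma> q L *v y t) (at t)" and N: "braJket \<sigma> (y t) \<noteq> 0"
    and \<Psi>: "(\<Psi> has_vector_derivative Vmat \<sigma> q l *v \<Psi> t) (at t)"
  shows "((\<lambda>t. Tmat \<sigma> L (y t) l *v \<Psi> t) has_vector_derivative
           Vmat \<sigma> (q + (cnj L - L) * P21 \<sigma> (y t)) l *v (Tmat \<sigma> L (y t) l *v \<Psi> t)) (at t)"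
proof -
  define c where "c = (cnj L - L) / (l - cnj L)"
  define P where "P = Pmat \<sigma> (y t)"
  define D where "D = Vmat \<sigma> q (cnj L) ** P - P ** Vmat \<sigma> q (cnj L)
                      + mat (\<i> / 4 * (cnj L - L)) ** (P ** pauli3 - pauli3 ** P) ** P"
  have "((\<lambda>t. Tmat \<sigma> L (y t) l) has_vector_derivative 0 + mat c ** D) (at t)"
    unfolding Tmat_eq c_def[symmetric] D_def P_def
    by (rule has_vector_derivative_add[OF has_vector_derivative_const
          has_vector_derivative_mat_matrix_mult[OF Pmat_has_vector_derivative[OF \<sigma> y N]]])
  from has_vector_derivative_matrix_vector_mult[OF this \<Psi>]
  have deriv: "((\<lambda>t. Tmat \<sigma> L (y t) l *v \<Psi> t) has_vector_derivative
          Tmat \<sigma> L (y t) l *v (Vmat \<sigma> q l *v \<Psi> t) + (0 + mat c ** D) *v \<Psi> t) (at t)" .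
  have "Tmat \<sigma> L (y t) l *v (Vmat \<sigma> q l *v \<Psi> t) + (0 + mat c ** D) *v \<Psi> t
      = (mat c ** D + Tmat \<sigma> L (y t) l ** Vmat \<sigma> q l) *v \<Psi> t"
    by (simp only: matrix_vector_mul_assoc matrix_vector_mult_add_rdistrib add_0_left add.commute)
  also have "mat c ** D + Tmat \<sigma> L (y t) l ** Vmat \<sigma> q l
      = Vmat \<sigma> (q + (cnj L - L) * P21 \<sigma> (y t)) l ** Tmat \<sigma> L (y t) l"
  proof -
    have \<mu>: "cnj (cnj L - L) = - (cnj L - L)" by simp
    have V': "Vmat \<sigma> (q + (cnj L - L) * P21 \<sigma> (y t)) l
        = Vmat \<sigma> q (cnj L) + mat (\<i> / 4 * (cnj L - L)) ** (P ** pauli3 - pauli3 ** P)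
          + mat (\<i> / 4 * (l - cnj L)) ** pauli3"
      unfolding Vmat_dressed[OF \<mu> N] P_def Vmat_shift[of \<sigma> q l "cnj L"] by (simp add: add_ac)
    have "c * (l - cnj L) = cnj L - L" using l unfolding c_def by simp
    from dressing_intertwines_flow[OF this D_def] show ?thesis
      unfolding Tmat_eq c_def[symmetric] P_def[symmetric] Vmat_shift[of \<sigma> q l "cnj L"] V' .
  qed
  also have "(Vmat \<sigma> (q + (cnj L - L) * P21 \<sigma> (y t)) l ** Tmat \<sigma> L (y t) l) *v \<Psi> t
      = Vmat \<sigma> (q + (cnj L - L) * P21 \<sigma> (y t)) l *v (Tmat \<sigma> L (y t) l *v \<Psi> t)"
    by (rule matrix_vector_mul_assoc[symmetric])
  finally have "Tmat \<sigma> L (y t) l *v (Vmat \<sigma> q l *v \<Psi> t) + (0 + mat c ** D) *v \<Psi> t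
      = Vmat \<sigma> (q + (cnj L - L) * P21 \<sigma> (y t)) l *v (Tmat \<sigma> L (y t) l *v \<Psi> t)" .
  with deriv show ?thesis by (simp only:)
qed

section \<open>Evolution of the potentials\<close>

lemma DERIV_norm_components:
  fixes y :: "real \<Rightarrow> complex^2"
  assumes y: "(y has_vector_derivative Vmat \<sigma> q L *v y t) (at t)"
  defines "X \<equiv> Im (cnj q * cnj (y t $ 1) * y t $ 2)"
  shows "((\<lambda>t. (cmod (y t $ 1))\<^sup>2) has_real_derivative - Im L / 2 * (cmod (y t $ 1))\<^sup>2 - \<sigma> * X) (at t)"
    and "((\<lambda>t. (cmod (y t $ 2))\<^sup>2) has_real_derivative Im L / 2 * (cmod (y t $ 2))\<^sup>2 + X) (at t)"
proof -
  have "((\<lambda>t. y t $ i) has_vector_derivative (Vmat \<sigma> q L *v y t) $ i) (at t)" for i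
    by (rule has_vector_derivative_vec_nth[OF y])
  note d = DERIV_cmod_power2[OF this]
  have "2 * Re (cnj (y t $ 1) * (Vmat \<sigma> q L *v y t) $ 1) = - Im L / 2 * (cmod (y t $ 1))\<^sup>2 - \<sigma> * X"
    and "2 * Re (cnj (y t $ 2) * (Vmat \<sigma> q L *v y t) $ 2) = Im L / 2 * (cmod (y t $ 2))\<^sup>2 + X"
    unfolding X_def Vmat_def mat2_mult_vec cmod_power2 by (simp_all add: field_simps power2_eq_square)
  with d[of 1] d[of 2]
  show "((\<lambda>t. (cmod (y t $ 1))\<^sup>2) has_real_derivative - Im L / 2 * (cmod (y t $ 1))\<^sup>2 - \<sigma> * X) (at t)"
    and "((\<lambda>t. (cmod (y t $ 2))\<^sup>2) has_real_derivative Im L / 2 * (cmod (y t $ 2))\<^sup>2 + X) (at t)"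
    by simp_all
qed

lemma DERIV_Re_braJket:
  fixes y :: "real \<Rightarrow> complex^2"
  assumes y: "(y has_vector_derivative Vmat \<sigma> q L *v y t) (at t)"
  shows "((\<lambda>t. Re (braJket \<sigma> (y t))) has_real_derivative
           Im L * (Re (braJket \<sigma> (y t)) / 2 - (cmod (y t $ 1))\<^sup>2)) (at t)"
proof -
  define X where "X = Im (cnj q * cnj (y t $ 1) * y t $ 2)"
  have "((\<lambda>t. (cmod (y t $ 1))\<^sup>2 + \<sigma> * (cmod (y t $ 2))\<^sup>2) has_real_derivative
          (- Im L / 2 * (cmod (y t $ 1))\<^sup>2 - \<sigma> * X) + \<sigma> * (Im L / 2 * (cmod (y t $ 2))\<^sup>2 + X)) (at t)"
    unfolding X_def by (intro DERIV_add DERIV_cmult DERIV_norm_components[OF y])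
  moreover have "(- Im L / 2 * (cmod (y t $ 1))\<^sup>2 - \<sigma> * X) + \<sigma> * (Im L / 2 * (cmod (y t $ 2))\<^sup>2 + X)
      = Im L * (((cmod (y t $ 1))\<^sup>2 + \<sigma> * (cmod (y t $ 2))\<^sup>2) / 2 - (cmod (y t $ 1))\<^sup>2)"
    by (simp add: field_simps)
  ultimately show ?thesis unfolding Re_braJket by (simp only:)
qed

lemma DERIV_ln_braJket:
  fixes y :: "real \<Rightarrow> complex^2"
  assumes y: "(y has_vector_derivative Vmat \<sigma> q L *v y t) (at t)" and N: "braJket \<sigma> (y t) \<noteq> 0"
  shows "((\<lambda>t. ln (Re (braJket \<sigma> (y t)))) has_real_derivative Im L * (1 / 2 - P11 \<sigma> (y t))) (at t)"
proof -
  have "Re (braJket \<sigma> (y t)) \<noteq> 0" using N by (simp add: Re_braJket_eq_0_iff)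
  from DERIV_chain2[OF DERIV_ln_nonzero[OF this] DERIV_Re_braJket[OF y]] this show ?thesis
    unfolding P11_def by (simp add: field_simps)
qed

lemma DERIV_P11:
  fixes y :: "real \<Rightarrow> complex^2"
  assumes y: "(y has_vector_derivative Vmat \<sigma> q L *v y t) (at t)" and N: "braJket \<sigma> (y t) \<noteq> 0"
  shows "((\<lambda>t. P11 \<sigma> (y t)) has_real_derivative
           - Im L * P11 \<sigma> (y t) * (1 - P11 \<sigma> (y t)) - \<sigma> * Im (cnj q * P21 \<sigma> (y t))) (at t)"
proof -
  define X where "X = Im (cnj q * cnj (y t $ 1) * y t $ 2)"
  define R where "R = Re (braJket \<sigma> (y t))"
  have R: "R \<noteq> 0" and "braJket \<sigma> (y t) = of_real R"
    using N unfolding R_def by (simp_all add: Re_braJket_eq_0_iff of_real_Re_braJket)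
  then have Im_eq: "Im (cnj q * P21 \<sigma> (y t)) = X / R" unfolding P21_def X_def by (simp add: mult.assoc)
  have d: "((\<lambda>t. P11 \<sigma> (y t)) has_real_derivative
      ((- Im L / 2 * (cmod (y t $ 1))\<^sup>2 - \<sigma> * X) * R - (cmod (y t $ 1))\<^sup>2 * (Im L * (R / 2 - (cmod (y t $ 1))\<^sup>2)))
        / (R * R)) (at t)"
    unfolding P11_def X_def R_def
    by (intro DERIV_divide DERIV_norm_components(1)[OF y] DERIV_Re_braJket[OF y]) (simp add: Re_braJket_eq_0_iff N)
  have "((- Im L / 2 * (cmod (y t $ 1))\<^sup>2 - \<sigma> * X) * R - (cmod (y t $ 1))\<^sup>2 * (Im L * (R / 2 - (cmod (y t $ 1))\<^sup>2)))
        / (R * R) = - Im L * P11 \<sigma> (y t) * (1 - P11 \<sigma> (y t)) - \<sigma> * (X / R)"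
    using R unfolding P11_def R_def[symmetric] by (simp add: field_simps power2_eq_square)
  with d show ?thesis unfolding Im_eq by (simp only:)
qed

lemma deriv_ln_braJket_ratio:
  fixes y y' :: "real \<Rightarrow> complex^2" and q q' :: "real \<Rightarrow> complex"
  assumes y: "\<And>t. (y has_vector_derivative Vmat \<sigma> (q t) L *v y t) (at t)"
    and y': "\<And>t. (y' has_vector_derivative Vmat \<sigma> (q' t) L *v y' t) (at t)"
    and N: "\<And>t. braJket \<sigma> (y t) \<noteq> 0" and N': "\<And>t. braJket \<sigma> (y' t) \<noteq> 0"
  shows "deriv (\<lambda>t. ln \<bar>Re (braJket \<sigma> (y' t)) / Re (braJket \<sigma> (y t))\<bar>) s
       = Im L * (P11 \<sigma> (y s) - P11 \<sigma> (y' s))"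
proof -
  have "(\<lambda>t. ln \<bar>Re (braJket \<sigma> (y' t)) / Re (braJket \<sigma> (y t))\<bar>)
      = (\<lambda>t. ln (Re (braJket \<sigma> (y' t))) - ln (Re (braJket \<sigma> (y t))))"
    by (simp add: ln_abs_real ln_div Re_braJket_eq_0_iff N N')
  moreover have "((\<lambda>t. ln (Re (braJket \<sigma> (y' t))) - ln (Re (braJket \<sigma> (y t)))) has_real_derivative
      Im L * (1 / 2 - P11 \<sigma> (y' s)) - Im L * (1 / 2 - P11 \<sigma> (y s))) (at s)"
    by (intro DERIV_diff DERIV_ln_braJket[OF y' N'] DERIV_ln_braJket[OF y N])
  ultimately show ?thesis by (simp add: DERIV_imp_deriv algebra_simps)
qed

lemma deriv2_ln_braJket:
  fixes y :: "real \<Rightarrow> complex^2" and q :: "real \<Rightarrow> complex"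
  assumes L: "Im L \<noteq> 0"
    and y: "\<And>t. (y has_vector_derivative Vmat \<sigma> (q t) L *v y t) (at t)"
    and N: "\<And>t. braJket \<sigma> (y t) \<noteq> 0"
  shows "deriv (deriv (\<lambda>t. ln (cmod (braJket \<sigma> (y t) / (cnj L - L))))) s
       = Im L * (Im L * P11 \<sigma> (y s) * (1 - P11 \<sigma> (y s)) + \<sigma> * Im (cnj (q s) * P21 \<sigma> (y s)))"
proof -
  have "cmod (cnj L - L) \<noteq> 0" using L by (simp add: complex_eq_iff)
  then have "(\<lambda>t. ln (cmod (braJket \<sigma> (y t) / (cnj L - L))))
      = (\<lambda>t. ln (Re (braJket \<sigma> (y t))) - ln (cmod (cnj L - L)))"
    by (simp add: norm_divide cmod_eq_Re ln_div ln_abs_real Re_braJket_eq_0_iff N)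
  moreover have "((\<lambda>t. ln (Re (braJket \<sigma> (y t))) - ln (cmod (cnj L - L))) has_real_derivative
      Im L * (1 / 2 - P11 \<sigma> (y t)) - 0) (at t)" for t
    by (intro DERIV_diff DERIV_ln_braJket[OF y N] DERIV_const)
  ultimately have "deriv (\<lambda>t. ln (cmod (braJket \<sigma> (y t) / (cnj L - L)))) = (\<lambda>t. Im L * (1 / 2 - P11 \<sigma> (y t)))"
    by (simp add: DERIV_imp_deriv fun_eq_iff)
  moreover have "((\<lambda>t. Im L * (1 / 2 - P11 \<sigma> (y t))) has_real_derivative
      Im L * (0 - (- Im L * P11 \<sigma> (y s) * (1 - P11 \<sigma> (y s)) - \<sigma> * Im (cnj (q s) * P21 \<sigma> (y s))))) (at s)"
    by (intro DERIV_cmult DERIV_diff DERIV_const DERIV_P11[OF y N])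
  ultimately show ?thesis by (simp add: DERIV_imp_deriv)
qed

lemma norm_dressed_potential:
  assumes \<sigma>: "\<sigma> = 1 \<or> \<sigma> = -1" and N: "braJket \<sigma> y \<noteq> 0"
  shows "(cmod (q + (cnj L - L) * P21 \<sigma> y))\<^sup>2
       = (cmod q)\<^sup>2 + 4 * \<sigma> * (Im L * (Im L * P11 \<sigma> y * (1 - P11 \<sigma> y) + \<sigma> * Im (cnj q * P21 \<sigma> y)))"
proof -
  define w where "w = P21 \<sigma> y"
  have \<mu>: "cnj L - L = - 2 * \<i> * of_real (Im L)" by (simp add: complex_eq_iff)
  have "(cmod (q + (cnj L - L) * w))\<^sup>2 = (cmod q)\<^sup>2 + 4 * Im L * Im (cnj q * w) + 4 * (Im L)\<^sup>2 * (cmod w)\<^sup>2"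
    unfolding \<mu> cmod_power2 by (simp add: power2_eq_square algebra_simps)
  also have "(cmod w)\<^sup>2 = \<sigma> * (P11 \<sigma> y * (1 - P11 \<sigma> y))"
  proof -
    have "cnj w * w = of_real ((cmod w)\<^sup>2)"
      by (subst mult.commute) (rule complex_norm_square[symmetric])
    with P21_cnj_mult[OF \<sigma> N] have "of_real (\<sigma> * (cmod w)\<^sup>2) = (of_real (P11 \<sigma> y * (1 - P11 \<sigma> y)) :: complex)"
      unfolding w_def[symmetric] by (simp only: of_real_mult of_real_diff of_real_1)
    then have "\<sigma> * (cmod w)\<^sup>2 = P11 \<sigma> y * (1 - P11 \<sigma> y)" by (simp only: of_real_eq_iff)
    then show ?thesis using \<sigma> by auto
  qed
  finally show ?thesis unfolding w_def using \<sigma> by (auto simp: algebra_simps power2_eq_square)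
qed

theorem proposition1:
  fixes a \<sigma> :: real and \<rho> :: "int \<Rightarrow> real \<Rightarrow> real" and q :: "int \<Rightarrow> real \<Rightarrow> complex"
    and lam1 :: complex and y1 :: "int \<Rightarrow> real \<Rightarrow> complex^2"
    and \<rho>1 :: "int \<Rightarrow> real \<Rightarrow> real" and q1 :: "int \<Rightarrow> real \<Rightarrow> complex"
  assumes a_pos: "a > 0"
    and sigma: "\<sigma> = 1 \<or> \<sigma> = -1"
    and lam1: "Im lam1 \<noteq> 0"
    and y1_U: "\<And>n s. y1 (n + 1) s = Umat a \<sigma> (\<rho> n s) (q n s) (q (n + 1) s) lam1 *v y1 n s"
    and y1_V: "\<And>n s. (y1 n has_vector_derivative (Vmat \<sigma> (q n s) lam1 *v y1 n s)) (at s)"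
    and nz: "\<And>n s. braJket \<sigma> (y1 n s) \<noteq> 0"
    and rho1_def: "\<And>n s. \<rho>1 n s = \<rho> n s - 2 / a *
        deriv (\<lambda>t. ln \<bar>Re (braJket \<sigma> (y1 (n + 1) t)) / Re (braJket \<sigma> (y1 n t))\<bar>) s"
    and q1_def: "\<And>n s. q1 n s = q n s +
        (cnj lam1 - lam1) * cnj (y1 n s $ 1) * (y1 n s $ 2) / braJket \<sigma> (y1 n s)"
  shows "(\<forall>(lam::complex) (\<Psi>::int \<Rightarrow> real \<Rightarrow> complex^2).
            lam \<noteq> 0 \<and> lam \<noteq> cnj lam1
            \<and> (\<forall>n s. \<Psi> (n + 1) s = Umat a \<sigma> (\<rho> n s) (q n s) (q (n + 1) s) lam *v \<Psi> n s)
            \<and> (\<forall>n s. (\<Psi> n has_vector_derivative (Vmat \<sigma> (q n s) lam *v \<Psi> n s)) (at s))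
          \<longrightarrow> (\<forall>n s.
                Tmat \<sigma> lam1 (y1 (n + 1) s) lam *v \<Psi> (n + 1) s
                  = Umat a \<sigma> (\<rho>1 n s) (q1 n s) (q1 (n + 1) s) lam *v (Tmat \<sigma> lam1 (y1 n s) lam *v \<Psi> n s)
              \<and> ((\<lambda>t. Tmat \<sigma> lam1 (y1 n t) lam *v \<Psi> n t) has_vector_derivative
                   (Vmat \<sigma> (q1 n s) lam *v (Tmat \<sigma> lam1 (y1 n s) lam *v \<Psi> n s))) (at s)))
       \<and> (\<forall>n s. (cmod (q1 n s))\<^sup>2 = (cmod (q n s))\<^sup>2 +
            4 * \<sigma> * deriv (deriv (\<lambda>t. ln (cmod (braJket \<sigma> (y1 n t) / (cnj lam1 - lam1))))) s)"
proof -
  have q1_eq: "q1 n s = q n s + (cnj lam1 - lam1) * P21 \<sigma> (y1 n s)" for n s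
    unfolding q1_def P21_def by (simp add: mult.assoc)
  have rho1_eq: "a * \<rho>1 n s = a * \<rho> n s + 2 * Im lam1 * (P11 \<sigma> (y1 (n + 1) s) - P11 \<sigma> (y1 n s))" for n s
    using a_pos unfolding rho1_def deriv_ln_braJket_ratio[OF y1_V y1_V nz nz] by (simp add: field_simps)
  have shift: "Tmat \<sigma> lam1 (y1 (n + 1) s) lam *v (Umat a \<sigma> (\<rho> n s) (q n s) (q (n + 1) s) lam *v x)
      = Umat a \<sigma> (\<rho>1 n s) (q1 n s) (q1 (n + 1) s) lam *v (Tmat \<sigma> lam1 (y1 n s) lam *v x)"
    if "lam \<noteq> 0" "lam \<noteq> cnj lam1" for lam n s x
    unfolding matrix_vector_mul_assoc
    by (simp only: Tmat_shift_intertwine[OF sigma lam1 that y1_U nz nz rho1_eq q1_eq q1_eq])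
  have flow: "((\<lambda>t. Tmat \<sigma> lam1 (y1 n t) lam *v \<Psi> n t) has_vector_derivative
      Vmat \<sigma> (q1 n s) lam *v (Tmat \<sigma> lam1 (y1 n s) lam *v \<Psi> n s)) (at s)"
    if "lam \<noteq> cnj lam1" and "(\<Psi> n has_vector_derivative Vmat \<sigma> (q n s) lam *v \<Psi> n s) (at s)" for lam \<Psi> n s
    unfolding q1_eq by (rule Tmat_flow_intertwine[OF sigma that(1) y1_V nz that(2)])
  have norm: "(cmod (q1 n s))\<^sup>2 = (cmod (q n s))\<^sup>2 +
      4 * \<sigma> * deriv (deriv (\<lambda>t. ln (cmod (braJket \<sigma> (y1 n t) / (cnj lam1 - lam1))))) s" for n s
    unfolding q1_eq deriv2_ln_braJket[OF lam1 y1_V nz] by (rule norm_dressed_potential[OF sigma nz])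
  show ?thesis by (auto simp: shift norm intro: flow)
qed

end
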